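(* Let $\Pi=(P_R,\psi)$ be a 3SS scheme with domain $\mathcal S$, let $P_{\mathbf X}$ be any distribution with support contained in $\mathcal S$, $\mathbf X=(X_1,X_2,X_3)\sim P_{\mathbf X}$, $R\sim P_R$ independent of $\mathbf X$, and $(W_{12},W_{23},W_{31})=\psi(\mathbf X,R)$. Then $$I(W_{12};W_{23}\mid W_{31})\ \ge\ RI(X_1;X_3),\quad I(W_{23};W_{31}\mid W_{12})\ \ge\ RI(X_2;X_1),\quad I(W_{31};W_{12}\mid W_{23})\ \ge\ RI(X_3;X_2).$$
   Context: Setup: $\mathcal X_1,\mathcal X_2,\mathcal X_3$ finite, $\mathcal S\subseteq\mathcal X_1\times\mathcal X_2\times\mathcal X_3$ nonempty. A distribution scheme $(P_R,\psi)$ consists of a distribution $P_R$ on a finite set $\mathcal R$ and a map $\psi:\mathcal S\times\mathcal R\to\mathcal W_{12}\times\mathcal W_{23}\times\mathcal W_{31}$ (finite share alphabets); shares are $(W_{12},W_{23},W_{31})=\psi(\mathbf x,R)$. Party $P_1$ sees $V_1=(W_{12},W_{31})$, $P_2$ sees $V_2=(W_{23},W_{12})$, $P_3$ sees $V_3=(W_{31},W_{23})$. It is a 3SS scheme if (Correctness) for each $i$ there is a function $\phi_i$ with $\Pr[\phi_i(V_i)=x_i]=1$ for every $\mathbf x\in\mathcal S$, and (Perfect privacy) for each $i$ and all $\mathbf x,\mathbf x'\in\mathcal S$ with $x_i=x'_i$, $V_i$ has the same distribution under $\mathbf x$ as under $\mathbf x'$. Residual information: for jointly distributed discrete $A,B$,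 let $A\wedge B$ denote the Gács–Körner common part (the maximal common function: the label of the connected component containing $(A,B)$ in the bipartite graph on $\mathrm{supp}(A)\cup\mathrm{supp}(B)$ with an edge $(a,b)$ iff $P_{AB}(a,b)>0$); then $RI(A;B):=I(A;B)-H(A\wedge B)=I(A;B\mid A\wedge B)$. *)

theory Defs
  imports "HOL-Probability.Probability"
begin

definition entropy_pmf :: "'a pmf \<Rightarrow> real" where
  "entropy_pmf p = - (\<Sum>x\<in>set_pmf p. pmf p x * log 2 (pmf p x))"

definition ent :: "'z pmf \<Rightarrow> ('z \<Rightarrow> 'a) \<Rightarrow> real" where
  "ent J f = entropy_pmf (map_pmf f J)"

definition mi :: "'z pmf \<Rightarrow> ('z \<Rightarrow> 'a) \<Rightarrow> ('z \<Rightarrow> 'b) \<Rightarrow> real" where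
  "mi J f g = ent J f + ent J g - ent J (\<lambda>z. (f z, g z))"

definition cmi :: "'z pmf \<Rightarrow> ('z \<Rightarrow> 'a) \<Rightarrow> ('z \<Rightarrow> 'b) \<Rightarrow> ('z \<Rightarrow> 'c) \<Rightarrow> real" where
  "cmi J f g h = ent J (\<lambda>z. (f z, h z)) + ent J (\<lambda>z. (g z, h z))
                 - ent J (\<lambda>z. (f z, g z, h z)) - ent J h"

text \<open>Gacs--Koerner common part of a pair distribution q on A x B:
  two A-values are linked if they share a B-value with positive joint
  probability; the common part of a sample (a,b) is the connected component
  of the characteristic bipartite graph containing (a,b), labelled by the set
  of A-vertices of that component.\<close>
definition gk_link :: "('a \<times> 'b) pmf \<Rightarrow> ('a \<times> 'a) set" where
  "gk_link q = {(a, a'). \<exists>b. pmf q (a, b) > 0 \<and> pmf q (a', b) > 0}"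

definition gk_common :: "('a \<times> 'b) pmf \<Rightarrow> 'a \<times> 'b \<Rightarrow> 'a set" where
  "gk_common q ab = {a'. (fst ab, a') \<in> (gk_link q)\<^sup>*}"

definition RI :: "('a \<times> 'b) pmf \<Rightarrow> real" where
  "RI q = mi q fst snd - ent q (gk_common q)"

definition view1 :: "'w1 \<times> 'w2 \<times> 'w3 \<Rightarrow> 'w1 \<times> 'w3" where
  "view1 w = (case w of (w12, w23, w31) \<Rightarrow> (w12, w31))"
definition view2 :: "'w1 \<times> 'w2 \<times> 'w3 \<Rightarrow> 'w2 \<times> 'w1" where
  "view2 w = (case w of (w12, w23, w31) \<Rightarrow> (w23, w12))"
definition view3 :: "'w1 \<times> 'w2 \<times> 'w3 \<Rightarrow> 'w3 \<times> 'w2" where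
  "view3 w = (case w of (w12, w23, w31) \<Rightarrow> (w31, w23))"

definition sec1 :: "'x1 \<times> 'x2 \<times> 'x3 \<Rightarrow> 'x1" where "sec1 x = fst x"
definition sec2 :: "'x1 \<times> 'x2 \<times> 'x3 \<Rightarrow> 'x2" where "sec2 x = fst (snd x)"
definition sec3 :: "'x1 \<times> 'x2 \<times> 'x3 \<Rightarrow> 'x3" where "sec3 x = snd (snd x)"

definition is_3SS ::
  "('x1 \<times> 'x2 \<times> 'x3) set \<Rightarrow> 'r pmf \<Rightarrow> ('x1 \<times> 'x2 \<times> 'x3 \<Rightarrow> 'r \<Rightarrow> 'w1 \<times> 'w2 \<times> 'w3) \<Rightarrow> bool"
where
  "is_3SS S PR psi \<longleftrightarrow>
    (\<exists>\<phi>1. \<forall>x\<in>S. measure_pmf.prob PR {r. \<phi>1 (view1 (psi x r)) = sec1 x} = 1) \<and>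
    (\<exists>\<phi>2. \<forall>x\<in>S. measure_pmf.prob PR {r. \<phi>2 (view2 (psi x r)) = sec2 x} = 1) \<and>
    (\<exists>\<phi>3. \<forall>x\<in>S. measure_pmf.prob PR {r. \<phi>3 (view3 (psi x r)) = sec3 x} = 1) \<and>
    (\<forall>x\<in>S. \<forall>x'\<in>S. sec1 x = sec1 x' \<longrightarrow>
        map_pmf (\<lambda>r. view1 (psi x r)) PR = map_pmf (\<lambda>r. view1 (psi x' r)) PR) \<and>
    (\<forall>x\<in>S. \<forall>x'\<in>S. sec2 x = sec2 x' \<longrightarrow>
        map_pmf (\<lambda>r. view2 (psi x r)) PR = map_pmf (\<lambda>r. view2 (psi x' r)) PR) \<and>
    (\<forall>x\<in>S. \<forall>x'\<in>S. sec3 x = sec3 x' \<longrightarrow>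
        map_pmf (\<lambda>r. view3 (psi x r)) PR = map_pmf (\<lambda>r. view3 (psi x' r)) PR)"

definition joint :: "'x pmf \<Rightarrow> 'r pmf \<Rightarrow> ('x \<Rightarrow> 'r \<Rightarrow> 'w) \<Rightarrow> ('x \<times> 'w) pmf" where
  "joint PX PR psi = bind_pmf PX (\<lambda>x. bind_pmf PR (\<lambda>r. return_pmf (x, psi x r)))"

definition W12 :: "'x \<times> 'w1 \<times> 'w2 \<times> 'w3 \<Rightarrow> 'w1" where "W12 z = fst (snd z)"
definition W23 :: "'x \<times> 'w1 \<times> 'w2 \<times> 'w3 \<Rightarrow> 'w2" where "W23 z = fst (snd (snd z))"
definition W31 :: "'x \<times> 'w1 \<times> 'w2 \<times> 'w3 \<Rightarrow> 'w3" where "W31 z = snd (snd (snd z))"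

end

theory Submission
  imports Defs
begin

text \<open>Consider the first inequality, with X = (X1, X2, X3), K the Gacs--Koerner common part of
  (X1, X3) and C = W31. Perfect privacy against P1 and against P3 makes the law of C given X depend
  only on X1 and only on X3, hence only on K, since a function invariant under both changes is
  constant on the components of the characteristic graph; so X - K - C is a Markov chain. As K is a
  function of X1 and of X3, this gives I(X1;X3) - H(K) \<le> I(X1;X3|C). Correctness makes X1 a
  function of (W12, W31) and X3 one of (W31, W23), so I(X1;X3|C) \<le> I(W12;W23|W31). The other two
  inequalities are the same argument for the other two pairs of parties.\<close>

section \<open>Entropy of functions of a finite random variable\<close>

definition prob_of_value :: "'z pmf \<Rightarrow> ('z \<Rightarrow> 'a) \<Rightarrow> 'z \<Rightarrow> real" where
  "prob_of_value J f z = measure_pmf.prob J {z'. f z' = f z}"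

lemma prob_of_value_pos: "z \<in> set_pmf J \<Longrightarrow> prob_of_value J f z > 0"
  unfolding prob_of_value_def by (rule measure_pmf_posI[of z]) auto

lemma sum_prob_vimage_eq_sum_pmf:
  fixes J :: "'z::finite pmf"
  shows "(\<Sum>y\<in>range f. measure_pmf.prob J (f -` {y}) * g y) = (\<Sum>z\<in>UNIV. pmf J z * g (f z))"
proof -
  have "(\<Sum>z\<in>UNIV. pmf J z * g (f z)) = (\<Sum>y\<in>range f. \<Sum>z\<in>{x. x \<in> UNIV \<and> f x = y}. pmf J z * g (f z))"
    by (rule sum.image_gen) simp
  also have "\<dots> = (\<Sum>y\<in>range f. (\<Sum>z\<in>{x. f x = y}. pmf J z) * g y)"
    by (simp add: sum_distrib_right)
  also have "\<dots> = (\<Sum>y\<in>range f. measure_pmf.prob J (f -` {y}) * g y)"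
    by (simp add: measure_measure_pmf_finite vimage_def)
  finally show ?thesis by simp
qed

lemma ent_eq_sum_log_prob_of_value:
  fixes J :: "'z::finite pmf"
  shows "ent J f = - (\<Sum>z\<in>UNIV. pmf J z * log 2 (prob_of_value J f z))"
proof -
  have "entropy_pmf (map_pmf f J) = - (\<Sum>y\<in>range f. pmf (map_pmf f J) y * log 2 (pmf (map_pmf f J) y))"
    unfolding entropy_pmf_def
  proof (rule arg_cong[where f=uminus], rule sum.mono_neutral_left)
    show "\<forall>i\<in>range f - set_pmf (map_pmf f J). pmf (map_pmf f J) i * log 2 (pmf (map_pmf f J) i) = 0"
      by (simp add: set_pmf_iff del: set_map_pmf)
  qed auto
  also have "\<dots> = - (\<Sum>z\<in>UNIV. pmf J z * log 2 (measure_pmf.prob J (f -` {f z})))"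
    by (simp add: pmf_map sum_prob_vimage_eq_sum_pmf)
  finally show ?thesis unfolding ent_def prob_of_value_def by (simp add: vimage_def)
qed

lemma ent_add_ent_eq:
  fixes J :: "'z::finite pmf"
  assumes "\<And>z. z \<in> set_pmf J \<Longrightarrow>
    prob_of_value J f z * prob_of_value J g z = prob_of_value J f' z * prob_of_value J g' z"
  shows "ent J f + ent J g = ent J f' + ent J g'"
proof -
  have "pmf J z * log 2 (prob_of_value J f z) + pmf J z * log 2 (prob_of_value J g z) =
        pmf J z * log 2 (prob_of_value J f' z) + pmf J z * log 2 (prob_of_value J g' z)"
    (is "?l z = ?r z") for z
  proof (cases "z \<in> set_pmf J")
    case True
    note pos = prob_of_value_pos[OF True]
    have "log 2 (prob_of_value J f z) + log 2 (prob_of_value J g z) =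
          log 2 (prob_of_value J f' z) + log 2 (prob_of_value J g' z)"
      using assms[OF True] pos[of f] pos[of g] pos[of f'] pos[of g'] by (metis log_mult less_irrefl)
    then show ?thesis by (simp only: distrib_left[symmetric])
  qed (simp add: set_pmf_iff)
  then have "(\<Sum>z\<in>UNIV. ?l z) = (\<Sum>z\<in>UNIV. ?r z)"
    by simp
  then show ?thesis
    unfolding ent_eq_sum_log_prob_of_value sum.distrib by linarith
qed

lemma ent_cong:
  fixes J :: "'z::finite pmf"
  assumes "\<And>z z'. z \<in> set_pmf J \<Longrightarrow> z' \<in> set_pmf J \<Longrightarrow> f z = f z' \<longleftrightarrow> g z = g z'"
  shows "ent J f = ent J g"
proof -
  have "prob_of_value J f z = prob_of_value J g z" if z: "z \<in> set_pmf J" for z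
  proof -
    have "{z'. f z' = f z} \<inter> set_pmf J = {z'. g z' = g z} \<inter> set_pmf J"
      using assms[OF z] by (auto simp: eq_commute)
    then show ?thesis unfolding prob_of_value_def by (metis measure_Int_set_pmf)
  qed
  then show ?thesis unfolding ent_eq_sum_log_prob_of_value
    by (intro arg_cong[where f=uminus] sum.cong refl) (metis mult_zero_left set_pmf_iff)
qed

lemma ent_map_pmf: "ent (map_pmf g J) f = ent J (\<lambda>z. f (g z))"
  unfolding ent_def by (simp add: map_pmf_comp)

lemma cmi_eq_sum_log_ratio:
  fixes J :: "'z::finite pmf"
  shows "cmi J f g h = (\<Sum>z\<in>UNIV. pmf J z * log 2 (prob_of_value J (\<lambda>z. (f z, g z, h z)) z /
            (prob_of_value J (\<lambda>z. (f z, h z)) z *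
             (prob_of_value J (\<lambda>z. (g z, h z)) z / prob_of_value J h z))))"
proof -
  have "pmf J z * log 2 (prob_of_value J (\<lambda>z. (f z, g z, h z)) z /
          (prob_of_value J (\<lambda>z. (f z, h z)) z *
           (prob_of_value J (\<lambda>z. (g z, h z)) z / prob_of_value J h z))) =
        pmf J z * log 2 (prob_of_value J (\<lambda>z. (f z, g z, h z)) z) + pmf J z * log 2 (prob_of_value J h z)
        - pmf J z * log 2 (prob_of_value J (\<lambda>z. (f z, h z)) z)
        - pmf J z * log 2 (prob_of_value J (\<lambda>z. (g z, h z)) z)" for z
  proof (cases "z \<in> set_pmf J")
    case True
    note pos = prob_of_value_pos[OF True]
    have "log 2 (prob_of_value J (\<lambda>z. (f z, g z, h z)) z /
          (prob_of_value J (\<lambda>z. (f z, h z)) z *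
           (prob_of_value J (\<lambda>z. (g z, h z)) z / prob_of_value J h z))) =
        log 2 (prob_of_value J (\<lambda>z. (f z, g z, h z)) z) + log 2 (prob_of_value J h z)
        - log 2 (prob_of_value J (\<lambda>z. (f z, h z)) z) - log 2 (prob_of_value J (\<lambda>z. (g z, h z)) z)"
      using pos[of "\<lambda>z. (f z, g z, h z)"] pos[of h] pos[of "\<lambda>z. (f z, h z)"] pos[of "\<lambda>z. (g z, h z)"]
      by (simp add: log_divide log_mult)
    then show ?thesis by (simp only: right_diff_distrib distrib_left)
  qed (simp add: set_pmf_iff)
  then show ?thesis
    unfolding cmi_def ent_eq_sum_log_prob_of_value by (simp add: sum.distrib sum_subtractf)
qed

lemma simple_function_measure_pmf_finite: "simple_function (measure_pmf (J :: 'z::finite pmf)) f"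
  unfolding simple_function_def by simp

lemma cmi_nonneg:
  fixes J :: "'z::finite pmf"
  shows "0 \<le> cmi J f g h"
proof -
  interpret information_space "measure_pmf J" 2
    by (rule information_space.intro[OF measure_pmf.prob_space_axioms])
       (simp add: information_space_axioms_def)
  define G where "G = (\<lambda>(x, y, w). log 2 (measure_pmf.prob J ((\<lambda>x. (f x, g x, h x)) -` {(x, y, w)}) /
       (measure_pmf.prob J ((\<lambda>x. (f x, h x)) -` {(x, w)}) *
        (measure_pmf.prob J ((\<lambda>x. (g x, h x)) -` {(y, w)}) / measure_pmf.prob J (h -` {w})))))"
  note sd = measure_pmf.simple_distributedI[OF simple_function_measure_pmf_finite measure_nonneg refl]
  have "0 \<le> (\<Sum>(x, y, w)\<in>range (\<lambda>x. (f x, g x, h x)).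
     measure_pmf.prob J ((\<lambda>x. (f x, g x, h x)) -` {(x, y, w)}) *
     log 2 (measure_pmf.prob J ((\<lambda>x. (f x, g x, h x)) -` {(x, y, w)}) /
       (measure_pmf.prob J ((\<lambda>x. (f x, h x)) -` {(x, w)}) *
        (measure_pmf.prob J ((\<lambda>x. (g x, h x)) -` {(y, w)}) / measure_pmf.prob J (h -` {w})))))"
    using conditional_mutual_information_nonneg[OF simple_function_measure_pmf_finite
        simple_function_measure_pmf_finite simple_function_measure_pmf_finite, of f g h]
      conditional_mutual_information_eq[where X=f and Y=g and Z=h, OF sd sd sd sd]
    by simp
  also have "\<dots> = (\<Sum>t\<in>range (\<lambda>x. (f x, g x, h x)).
      measure_pmf.prob J ((\<lambda>x. (f x, g x, h x)) -` {t}) * G t)"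
    by (intro sum.cong refl) (auto simp: G_def split: prod.splits)
  also have "\<dots> = (\<Sum>z\<in>UNIV. pmf J z * G (f z, g z, h z))"
    by (rule sum_prob_vimage_eq_sum_pmf)
  also have "\<dots> = cmi J f g h"
    unfolding cmi_eq_sum_log_ratio G_def
    by (intro sum.cong refl) (simp add: prob_of_value_def vimage_def)
  finally show ?thesis .
qed

lemma cmi_le_cmi_of_functions:
  fixes J :: "'z::finite pmf"
  assumes U: "\<And>z. z \<in> set_pmf J \<Longrightarrow> U z = fu (a z, c z)"
    and V: "\<And>z. z \<in> set_pmf J \<Longrightarrow> V z = fv (c z, b z)"
  shows "cmi J U V c \<le> cmi J a b c"
proof -
  have "0 \<le> cmi J a b (\<lambda>z. (V z, c z))" "0 \<le> cmi J a V (\<lambda>z. (U z, c z))"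
    by (rule cmi_nonneg)+
  moreover have "ent J (\<lambda>z. (b z, V z, c z)) = ent J (\<lambda>z. (b z, c z))"
    "ent J (\<lambda>z. (a z, b z, V z, c z)) = ent J (\<lambda>z. (a z, b z, c z))"
    "ent J (\<lambda>z. (a z, U z, c z)) = ent J (\<lambda>z. (a z, c z))"
    "ent J (\<lambda>z. (V z, U z, c z)) = ent J (\<lambda>z. (U z, V z, c z))"
    "ent J (\<lambda>z. (a z, V z, U z, c z)) = ent J (\<lambda>z. (a z, V z, c z))"
    by (rule ent_cong; auto simp: U V)+
  ultimately show ?thesis unfolding cmi_def by simp
qed

text \<open>As K is a function of both U and V, I(U;V) - H(K) = I(U;V|K); the Markov chain X - K - c
  gives I(U;V|K) = I(U;V|K,c), and I(U;V|K,c) \<le> I(U;V|c) because K is a function of U.\<close>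
lemma mi_sub_ent_common_le_cmi:
  fixes J :: "'z::finite pmf"
  assumes KU: "\<And>z z'. z \<in> set_pmf J \<Longrightarrow> z' \<in> set_pmf J \<Longrightarrow> U z = U z' \<Longrightarrow> K z = K z'"
    and KV: "\<And>z z'. z \<in> set_pmf J \<Longrightarrow> z' \<in> set_pmf J \<Longrightarrow> V z = V z' \<Longrightarrow> K z = K z'"
    and UX: "\<And>z z'. z \<in> set_pmf J \<Longrightarrow> z' \<in> set_pmf J \<Longrightarrow> X z = X z' \<Longrightarrow> U z = U z'"
    and VX: "\<And>z z'. z \<in> set_pmf J \<Longrightarrow> z' \<in> set_pmf J \<Longrightarrow> X z = X z' \<Longrightarrow> V z = V z'"
    and markov: "cmi J X c K = 0"
  shows "mi J U V - ent J K \<le> cmi J U V c"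
proof -
  have "ent J (\<lambda>z. (X z, K z)) = ent J X"
    "ent J (\<lambda>z. (c z, K z)) = ent J (\<lambda>z. (K z, c z))"
    "ent J (\<lambda>z. (X z, c z, K z)) = ent J (\<lambda>z. (X z, c z))"
    by (rule ent_cong; auto dest: KU UX)+
  with markov have M: "ent J (\<lambda>z. (X z, c z)) + ent J K = ent J X + ent J (\<lambda>z. (K z, c z))"
    unfolding cmi_def by simp
  have "0 \<le> cmi J X c (\<lambda>z. (U z, V z, K z))" "0 \<le> cmi J V c (\<lambda>z. (U z, K z))"
    "0 \<le> cmi J K K c" "0 \<le> cmi J U c (\<lambda>z. (V z, K z))"
    by (rule cmi_nonneg)+
  moreover have "ent J (\<lambda>z. (X z, U z, V z, K z)) = ent J X"
    "ent J (\<lambda>z. (X z, c z, U z, V z, K z)) = ent J (\<lambda>z. (X z, c z))"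
    "ent J (\<lambda>z. (U z, V z, K z)) = ent J (\<lambda>z. (U z, V z))"
    "ent J (\<lambda>z. (V z, U z, K z)) = ent J (\<lambda>z. (U z, V z))"
    "ent J (\<lambda>z. (U z, K z)) = ent J U"
    "ent J (\<lambda>z. (V z, c z, U z, K z)) = ent J (\<lambda>z. (c z, U z, V z, K z))"
    "ent J (\<lambda>z. (U z, c z, V z, K z)) = ent J (\<lambda>z. (c z, U z, V z, K z))"
    "ent J (\<lambda>z. (K z, K z, c z)) = ent J (\<lambda>z. (K z, c z))"
    "ent J (\<lambda>z. (V z, K z)) = ent J V"
    "ent J (\<lambda>z. (U z, c z)) = ent J (\<lambda>z. (c z, U z, K z))"
    "ent J (\<lambda>z. (V z, c z)) = ent J (\<lambda>z. (c z, V z, K z))"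
    "ent J (\<lambda>z. (U z, V z, c z)) = ent J (\<lambda>z. (c z, U z, V z, K z))"
    by (rule ent_cong; auto dest: KU KV UX VX)+
  ultimately show ?thesis using M unfolding mi_def cmi_def by simp
qed

section \<open>The joint law of secrets and shares\<close>

lemma joint_eq_bind_map_pmf: "joint PX PR psi = bind_pmf PX (\<lambda>x. map_pmf (\<lambda>r. (x, psi x r)) PR)"
  unfolding joint_def map_pmf_def ..

lemma set_pmf_joint:
  "set_pmf (joint PX PR psi) = (\<Union>x\<in>set_pmf PX. (\<lambda>r. (x, psi x r)) ` set_pmf PR)"
  unfolding joint_eq_bind_map_pmf by simp

lemma map_pmf_joint_secrets:
  "map_pmf (\<lambda>z. f (fst z)) (joint PX PR psi) = map_pmf f PX"
  unfolding joint_eq_bind_map_pmf map_bind_pmf map_pmf_comp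
  by (simp add: map_pmf_const bind_return_pmf' map_pmf_def[symmetric])

lemma prob_joint:
  fixes PX :: "'x::finite pmf" and psi :: "'x \<Rightarrow> 'r \<Rightarrow> 'w::finite"
  shows "measure_pmf.prob (joint PX PR psi) {z. fst z \<in> A \<and> snd z \<in> B} =
    (\<Sum>x\<in>A. pmf PX x * measure_pmf.prob PR {r. psi x r \<in> B})"
proof -
  let ?E = "{z. fst z \<in> A \<and> snd z \<in> B}"
  have "measure_pmf.prob (joint PX PR psi) ?E = (\<Sum>z\<in>?E. pmf (joint PX PR psi) z)"
    by (simp add: measure_measure_pmf_finite)
  also have "\<dots> = (\<Sum>z\<in>?E. \<Sum>x\<in>UNIV. pmf (map_pmf (\<lambda>r. (x, psi x r)) PR) z * pmf PX x)"
    unfolding joint_eq_bind_map_pmf pmf_bind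
    by (intro sum.cong refl integral_measure_pmf_real) auto
  also have "\<dots> = (\<Sum>x\<in>UNIV. pmf PX x * (\<Sum>z\<in>?E. pmf (map_pmf (\<lambda>r. (x, psi x r)) PR) z))"
    by (subst sum.swap) (simp add: sum_distrib_left mult.commute)
  also have "\<dots> = (\<Sum>x\<in>UNIV. pmf PX x * (if x \<in> A then measure_pmf.prob PR {r. psi x r \<in> B} else 0))"
    by (intro sum.cong refl) (simp add: measure_measure_pmf_finite[symmetric] vimage_def)
  also have "\<dots> = (\<Sum>x\<in>A. pmf PX x * measure_pmf.prob PR {r. psi x r \<in> B})"
    by (simp add: if_distrib sum.If_cases Int_absorb1)
  finally show ?thesis .
qed

lemma cmi_joint_eq_0_if_law_factors:
  fixes PX :: "'x::finite pmf" and PR :: "'r::finite pmf" and psi :: "'x \<Rightarrow> 'r \<Rightarrow> 'w::finite"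
  assumes law: "\<And>x x'. x \<in> set_pmf PX \<Longrightarrow> x' \<in> set_pmf PX \<Longrightarrow> \<kappa> x = \<kappa> x' \<Longrightarrow>
       map_pmf (\<lambda>r. C (psi x r)) PR = map_pmf (\<lambda>r. C (psi x' r)) PR"
  shows "cmi (joint PX PR psi) fst (\<lambda>z. C (snd z)) (\<lambda>z. \<kappa> (fst z)) = 0"
proof -
  define J where "J = joint PX PR psi"
  have "prob_of_value J (\<lambda>z. (fst z, C (snd z))) z0 * prob_of_value J (\<lambda>z. \<kappa> (fst z)) z0 =
        prob_of_value J fst z0 * prob_of_value J (\<lambda>z. (\<kappa> (fst z), C (snd z))) z0"
    if supp: "z0 \<in> set_pmf J" for z0
  proof -
    obtain x0 r0 where x0: "x0 \<in> set_pmf PX" and z0: "z0 = (x0, psi x0 r0)"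
      using supp unfolding J_def set_pmf_joint by blast
    define w0 where "w0 = C (psi x0 r0)"
    define \<beta> where "\<beta> x = pmf (map_pmf (\<lambda>r. C (psi x r)) PR) w0" for x
    define T where "T = \<kappa> -` {\<kappa> x0}"
    have mem_T: "x \<in> T \<longleftrightarrow> \<kappa> x = \<kappa> x0" for x
      unfolding T_def by simp
    have \<beta>_eq: "measure_pmf.prob PR {r. C (psi x r) = w0} = \<beta> x" for x
      unfolding \<beta>_def pmf_map by (simp add: vimage_def)
    have "pmf PX x * \<beta> x = pmf PX x * \<beta> x0" if "x \<in> T" for x
      using law[OF _ x0, of x] that by (cases "x \<in> set_pmf PX") (auto simp: mem_T \<beta>_def set_pmf_iff)
    then have \<beta>_T: "(\<Sum>x\<in>T. pmf PX x * \<beta> x) = \<beta> x0 * (\<Sum>x\<in>T. pmf PX x)"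
      unfolding sum_distrib_left by (intro sum.cong refl) (simp add: mult.commute)
    have "prob_of_value J (\<lambda>z. (fst z, C (snd z))) z0 = pmf PX x0 * \<beta> x0"
      using prob_joint[where PX=PX and A="{x0}" and PR=PR and psi=psi and B="C -` {w0}"]
      by (simp add: prob_of_value_def J_def z0 w0_def[symmetric] \<beta>_eq)
    moreover have "prob_of_value J fst z0 = pmf PX x0"
      using prob_joint[where PX=PX and A="{x0}" and PR=PR and psi=psi and B="UNIV"] by (simp add: prob_of_value_def J_def z0)
    moreover have "prob_of_value J (\<lambda>z. \<kappa> (fst z)) z0 = (\<Sum>x\<in>T. pmf PX x)"
      using prob_joint[where PX=PX and A="T" and PR=PR and psi=psi and B="UNIV"] by (simp add: prob_of_value_def J_def z0 mem_T)
    moreover have "prob_of_value J (\<lambda>z. (\<kappa> (fst z), C (snd z))) z0 = \<beta> x0 * (\<Sum>x\<in>T. pmf PX x)"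
      using prob_joint[where PX=PX and A="T" and PR=PR and psi=psi and B="C -` {w0}"]
      by (simp add: prob_of_value_def J_def z0 mem_T w0_def[symmetric] \<beta>_eq \<beta>_T)
    ultimately show ?thesis by simp
  qed
  then have "ent J (\<lambda>z. (fst z, C (snd z))) + ent J (\<lambda>z. \<kappa> (fst z)) =
        ent J fst + ent J (\<lambda>z. (\<kappa> (fst z), C (snd z)))"
    by (rule ent_add_ent_eq)
  moreover have "ent J (\<lambda>z. (fst z, \<kappa> (fst z))) = ent J fst"
    "ent J (\<lambda>z. (C (snd z), \<kappa> (fst z))) = ent J (\<lambda>z. (\<kappa> (fst z), C (snd z)))"
    "ent J (\<lambda>z. (fst z, C (snd z), \<kappa> (fst z))) = ent J (\<lambda>z. (fst z, C (snd z)))"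
    by (rule ent_cong; auto)+
  ultimately show ?thesis unfolding cmi_def J_def by simp
qed

section \<open>The Gacs--Koerner common part\<close>

lemma gk_link_map_pmf_iff:
  "(u, u') \<in> gk_link (map_pmf (\<lambda>x. (sa x, sb x)) PX) \<longleftrightarrow>
    (\<exists>y\<in>set_pmf PX. \<exists>y'\<in>set_pmf PX. sa y = u \<and> sa y' = u' \<and> sb y = sb y')"
  unfolding gk_link_def by (auto simp: pmf_positive_iff)

lemma gk_common_map_pmf_eq_if_snd_eq:
  assumes "x \<in> set_pmf PX" "x' \<in> set_pmf PX" "sb x = sb x'"
  shows "gk_common (map_pmf (\<lambda>x. (sa x, sb x)) PX) (sa x, sb x) =
         gk_common (map_pmf (\<lambda>x. (sa x, sb x)) PX) (sa x', sb x')"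
proof -
  let ?q = "map_pmf (\<lambda>x. (sa x, sb x)) PX"
  have "(sa x, sa x') \<in> gk_link ?q" "(sa x', sa x) \<in> gk_link ?q"
    unfolding gk_link_map_pmf_iff using assms by metis+
  then show ?thesis unfolding gk_common_def
    by (auto intro: converse_rtrancl_into_rtrancl)
qed

text \<open>By the first invariance \<alpha> factors through sa; by the second, the induced function is
  constant along the links, hence on the components of the characteristic graph.\<close>
lemma eq_if_gk_common_map_pmf_eq:
  assumes inv_a: "\<And>x x'. x \<in> set_pmf PX \<Longrightarrow> x' \<in> set_pmf PX \<Longrightarrow> sa x = sa x' \<Longrightarrow> \<alpha> x = \<alpha> x'"
    and inv_b: "\<And>x x'. x \<in> set_pmf PX \<Longrightarrow> x' \<in> set_pmf PX \<Longrightarrow> sb x = sb x' \<Longrightarrow> \<alpha> x = \<alpha> x'"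
    and x: "x \<in> set_pmf PX" and x': "x' \<in> set_pmf PX"
    and eq: "gk_common (map_pmf (\<lambda>x. (sa x, sb x)) PX) (sa x, sb x) =
             gk_common (map_pmf (\<lambda>x. (sa x, sb x)) PX) (sa x', sb x')"
  shows "\<alpha> x = \<alpha> x'"
proof -
  let ?q = "map_pmf (\<lambda>x. (sa x, sb x)) PX"
  define \<alpha>' where "\<alpha>' u = \<alpha> (SOME y. y \<in> set_pmf PX \<and> sa y = u)" for u
  have \<alpha>': "\<alpha>' (sa y) = \<alpha> y" if "y \<in> set_pmf PX" for y
  proof -
    have "\<exists>y'. y' \<in> set_pmf PX \<and> sa y' = sa y" using that by blast
    then have "(SOME y'. y' \<in> set_pmf PX \<and> sa y' = sa y) \<in> set_pmf PX \<and>
               sa (SOME y'. y' \<in> set_pmf PX \<and> sa y' = sa y) = sa y"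
      by (rule someI_ex)
    then show ?thesis unfolding \<alpha>'_def using inv_a that by blast
  qed
  have link: "\<alpha>' u = \<alpha>' u'" if "(u, u') \<in> gk_link ?q" for u u'
    using that \<alpha>' inv_b unfolding gk_link_map_pmf_iff by metis
  have "sa x' \<in> gk_common ?q (sa x, sb x)"
    using eq unfolding gk_common_def by simp
  then have "(sa x, sa x') \<in> (gk_link ?q)\<^sup>*"
    unfolding gk_common_def by simp
  then have "\<alpha>' (sa x) = \<alpha>' (sa x')"
    by (induction rule: rtrancl_induct) (auto dest: link)
  then show ?thesis using \<alpha>' x x' by simp
qed

section \<open>Shares of a secret sharing scheme\<close>

lemma prob_eq_1_imp_on_set_pmf:
  "measure_pmf.prob p {x. P x} = 1 \<Longrightarrow> x \<in> set_pmf p \<Longrightarrow> P x"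
  using measure_pmf.prob_eq_1[of "{x. P x}" p] by (simp add: AE_measure_pmf_iff)

lemma law_share_eq_if_gk_common_eq:
  fixes PX :: "'x pmf" and PR :: "'r pmf" and psi :: "'x \<Rightarrow> 'r \<Rightarrow> 'w"
  assumes PX: "set_pmf PX \<subseteq> S"
    and private_a: "\<forall>x\<in>S. \<forall>x'\<in>S. sa x = sa x' \<longrightarrow>
        map_pmf (\<lambda>r. va (psi x r)) PR = map_pmf (\<lambda>r. va (psi x' r)) PR"
    and private_b: "\<forall>x\<in>S. \<forall>x'\<in>S. sb x = sb x' \<longrightarrow>
        map_pmf (\<lambda>r. vb (psi x r)) PR = map_pmf (\<lambda>r. vb (psi x' r)) PR"
    and va: "\<And>w. va w = (A w, C w)" and vb: "\<And>w. vb w = (C w, B w)"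
    and x: "x \<in> set_pmf PX" and x': "x' \<in> set_pmf PX"
    and eq: "gk_common (map_pmf (\<lambda>x. (sa x, sb x)) PX) (sa x, sb x) =
             gk_common (map_pmf (\<lambda>x. (sa x, sb x)) PX) (sa x', sb x')"
  shows "map_pmf (\<lambda>r. C (psi x r)) PR = map_pmf (\<lambda>r. C (psi x' r)) PR"
proof (rule eq_if_gk_common_map_pmf_eq[where sa=sa and sb=sb, OF _ _ x x' eq])
  have C_va: "map_pmf (\<lambda>r. C (psi y r)) PR = map_pmf snd (map_pmf (\<lambda>r. va (psi y r)) PR)"
    and C_vb: "map_pmf (\<lambda>r. C (psi y r)) PR = map_pmf fst (map_pmf (\<lambda>r. vb (psi y r)) PR)" for y
    by (simp_all add: map_pmf_comp va vb)
  show "map_pmf (\<lambda>r. C (psi y r)) PR = map_pmf (\<lambda>r. C (psi y' r)) PR"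
    if "y \<in> set_pmf PX" "y' \<in> set_pmf PX" "sa y = sa y'" for y y'
    unfolding C_va using private_a PX that by (metis subsetD)
  show "map_pmf (\<lambda>r. C (psi y r)) PR = map_pmf (\<lambda>r. C (psi y' r)) PR"
    if "y \<in> set_pmf PX" "y' \<in> set_pmf PX" "sb y = sb y'" for y y'
    unfolding C_vb using private_b PX that by (metis subsetD)
qed

text \<open>One pair of parties, whose views (A, C) and (C, B) overlap in the share C; the main theorem
  applies this to the three cyclic pairs.\<close>
lemma RI_le_cmi_shares:
  fixes PX :: "'x::finite pmf" and PR :: "'r::finite pmf" and psi :: "'x \<Rightarrow> 'r \<Rightarrow> 'w::finite"
  assumes PX: "set_pmf PX \<subseteq> S"
    and decode_a: "\<forall>x\<in>S. measure_pmf.prob PR {r. fa (va (psi x r)) = sa x} = 1"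
    and decode_b: "\<forall>x\<in>S. measure_pmf.prob PR {r. fb (vb (psi x r)) = sb x} = 1"
    and private_a: "\<forall>x\<in>S. \<forall>x'\<in>S. sa x = sa x' \<longrightarrow>
        map_pmf (\<lambda>r. va (psi x r)) PR = map_pmf (\<lambda>r. va (psi x' r)) PR"
    and private_b: "\<forall>x\<in>S. \<forall>x'\<in>S. sb x = sb x' \<longrightarrow>
        map_pmf (\<lambda>r. vb (psi x r)) PR = map_pmf (\<lambda>r. vb (psi x' r)) PR"
    and va: "\<And>w. va w = (A w, C w)" and vb: "\<And>w. vb w = (C w, B w)"
  shows "RI (map_pmf (\<lambda>z. (sa (fst z), sb (fst z))) (joint PX PR psi))
     \<le> cmi (joint PX PR psi) (\<lambda>z. A (snd z)) (\<lambda>z. B (snd z)) (\<lambda>z. C (snd z))"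
proof -
  define J where "J = joint PX PR psi"
  define q where "q = map_pmf (\<lambda>x. (sa x, sb x)) PX"
  define \<kappa> where "\<kappa> x = gk_common q (sa x, sb x)" for x
  have supp: "fst z \<in> set_pmf PX \<and> (\<exists>r\<in>set_pmf PR. snd z = psi (fst z) r)" if "z \<in> set_pmf J" for z
    using that unfolding J_def set_pmf_joint by auto
  have "cmi J (\<lambda>z. sa (fst z)) (\<lambda>z. sb (fst z)) (\<lambda>z. C (snd z)) \<le>
        cmi J (\<lambda>z. A (snd z)) (\<lambda>z. B (snd z)) (\<lambda>z. C (snd z))"
  proof (rule cmi_le_cmi_of_functions)
    fix z assume "z \<in> set_pmf J"
    then obtain x r where x: "x \<in> S" and r: "r \<in> set_pmf PR" and z: "z = (x, psi x r)"
      using supp PX by (metis prod.collapse subsetD)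
    show "sa (fst z) = fa (A (snd z), C (snd z))"
      using prob_eq_1_imp_on_set_pmf[OF decode_a[rule_format, OF x] r] by (simp add: z va)
    show "sb (fst z) = fb (C (snd z), B (snd z))"
      using prob_eq_1_imp_on_set_pmf[OF decode_b[rule_format, OF x] r] by (simp add: z vb)
  qed
  moreover have "mi J (\<lambda>z. sa (fst z)) (\<lambda>z. sb (fst z)) - ent J (\<lambda>z. \<kappa> (fst z)) \<le>
        cmi J (\<lambda>z. sa (fst z)) (\<lambda>z. sb (fst z)) (\<lambda>z. C (snd z))"
  proof (rule mi_sub_ent_common_le_cmi)
    have "map_pmf (\<lambda>r. C (psi x r)) PR = map_pmf (\<lambda>r. C (psi x' r)) PR"
      if "x \<in> set_pmf PX" "x' \<in> set_pmf PX" "\<kappa> x = \<kappa> x'" for x x'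
      using law_share_eq_if_gk_common_eq[OF PX private_a private_b va vb] that
      unfolding \<kappa>_def q_def by blast
    then show "cmi J fst (\<lambda>z. C (snd z)) (\<lambda>z. \<kappa> (fst z)) = 0"
      unfolding J_def by (rule cmi_joint_eq_0_if_law_factors)
  next
    fix z z' assume "z \<in> set_pmf J" "z' \<in> set_pmf J" "sb (fst z) = sb (fst z')"
    with supp show "\<kappa> (fst z) = \<kappa> (fst z')"
      unfolding \<kappa>_def q_def by (intro gk_common_map_pmf_eq_if_snd_eq) auto
  qed (auto simp: \<kappa>_def gk_common_def)
  moreover have "RI (map_pmf (\<lambda>z. (sa (fst z), sb (fst z))) J) =
      mi J (\<lambda>z. sa (fst z)) (\<lambda>z. sb (fst z)) - ent J (\<lambda>z. \<kappa> (fst z))"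
    unfolding RI_def mi_def ent_map_pmf
    by (simp add: J_def q_def \<kappa>_def map_pmf_joint_secrets[of "\<lambda>x. (sa x, sb x)"])
  ultimately show ?thesis unfolding J_def by linarith
qed

theorem mainTheorem4:
  fixes S :: "('x1::finite \<times> 'x2::finite \<times> 'x3::finite) set"
    and PR :: "'r::finite pmf"
    and psi :: "'x1 \<times> 'x2 \<times> 'x3 \<Rightarrow> 'r \<Rightarrow> 'w1::finite \<times> 'w2::finite \<times> 'w3::finite"
    and PX :: "('x1 \<times> 'x2 \<times> 'x3) pmf"
  assumes "S \<noteq> {}"
    and "is_3SS S PR psi"
    and "set_pmf PX \<subseteq> S"
  defines "J \<equiv> joint PX PR psi"
  shows "cmi J W12 W23 W31 \<ge> RI (map_pmf (\<lambda>z. (sec1 (fst z), sec3 (fst z))) J) \<and>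
         cmi J W23 W31 W12 \<ge> RI (map_pmf (\<lambda>z. (sec2 (fst z), sec1 (fst z))) J) \<and>
         cmi J W31 W12 W23 \<ge> RI (map_pmf (\<lambda>z. (sec3 (fst z), sec2 (fst z))) J)"
proof -
  from assms(2) obtain \<phi>1 \<phi>2 \<phi>3 where
    dec1: "\<forall>x\<in>S. measure_pmf.prob PR {r. \<phi>1 (view1 (psi x r)) = sec1 x} = 1" and
    dec2: "\<forall>x\<in>S. measure_pmf.prob PR {r. \<phi>2 (view2 (psi x r)) = sec2 x} = 1" and
    dec3: "\<forall>x\<in>S. measure_pmf.prob PR {r. \<phi>3 (view3 (psi x r)) = sec3 x} = 1" and
    priv1: "\<forall>x\<in>S. \<forall>x'\<in>S. sec1 x = sec1 x' \<longrightarrow>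
        map_pmf (\<lambda>r. view1 (psi x r)) PR = map_pmf (\<lambda>r. view1 (psi x' r)) PR" and
    priv2: "\<forall>x\<in>S. \<forall>x'\<in>S. sec2 x = sec2 x' \<longrightarrow>
        map_pmf (\<lambda>r. view2 (psi x r)) PR = map_pmf (\<lambda>r. view2 (psi x' r)) PR" and
    priv3: "\<forall>x\<in>S. \<forall>x'\<in>S. sec3 x = sec3 x' \<longrightarrow>
        map_pmf (\<lambda>r. view3 (psi x r)) PR = map_pmf (\<lambda>r. view3 (psi x' r)) PR"
    unfolding is_3SS_def by blast
  have view1: "view1 w = (fst w, snd (snd w))"
    and view2: "view2 w = (fst (snd w), fst w)"
    and view3: "view3 w = (snd (snd w), fst (snd w))" for w :: "'w1 \<times> 'w2 \<times> 'w3"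
    by (simp_all add: view1_def view2_def view3_def split: prod.split)
  show ?thesis
    unfolding J_def W12_def[abs_def] W23_def[abs_def] W31_def[abs_def]
    using RI_le_cmi_shares[where A=fst and B="\<lambda>w. fst (snd w)" and C="\<lambda>w. snd (snd w)",
        OF assms(3) dec1 dec3 priv1 priv3 view1 view3]
      RI_le_cmi_shares[where A="\<lambda>w. fst (snd w)" and B="\<lambda>w. snd (snd w)" and C=fst,
        OF assms(3) dec2 dec1 priv2 priv1 view2 view1]
      RI_le_cmi_shares[where A="\<lambda>w. snd (snd w)" and B=fst and C="\<lambda>w. fst (snd w)",
        OF assms(3) dec3 dec2 priv3 priv2 view3 view2]
    by simp
qed

end
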